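(* Let $n>m\geq 0$ be integers and $\gamma$ a real number, and let $G^{\gamma}_{mn}$ be Budak's function. Then for all real $\omega$, $$|G^{\gamma}_{mn}(j\omega)|^2=\left[\frac{(2n)!}{(2m)!}\right]^2\frac{m!}{n!}\cdot\frac{\sum_{i=0}^{m}\binom{m}{i}\frac{(2i)!}{i!}(m+i)!\,[2(\gamma-1)\omega]^{2(m-i)}}{\sum_{k=0}^{n}\binom{n}{k}\frac{(2k)!}{k!}(n+k)!\,(2\gamma\omega)^{2(n-k)}}.$$
   Context: Generalized Bessel polynomials: $B_n(s,\alpha,\beta)=\sum_{k=0}^{n}\binom{n}{k}\frac{(n+k+\alpha-2)^{(k)}}{\beta^k}s^{n-k}$, with $(q)^{(k)}=q(q-1)\cdots(q-k+1)$, $(q)^{(0)}=1$; in particular $B_n(s,2,1)=\sum_{k=0}^n\binom{n}{k}\frac{(n+k)!}{n!}s^{n-k}$. Budak's function is $$G^{\gamma}_{mn}(s)=K\,\frac{B_m(2(\gamma-1)s,2,1)}{B_n(2\gamma s,2,1)},\qquad K=\frac{B_n(0,2,1)}{B_m(0,2,1)},$$ so that $G^{\gamma}_{mn}(0)=1$. *)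

theory Defs
  imports "HOL-Analysis.Analysis"
begin

definition falling_fact :: "complex \<Rightarrow> nat \<Rightarrow> complex" where
  "falling_fact q k = (\<Prod>i<k. q - of_nat i)"

definition bessel_gen :: "nat \<Rightarrow> complex \<Rightarrow> complex \<Rightarrow> complex \<Rightarrow> complex" where
  "bessel_gen n s \<alpha> \<beta> =
     (\<Sum>k=0..n. of_nat (n choose k) * falling_fact (of_nat n + of_nat k + \<alpha> - 2) k
                 / \<beta> ^ k * s ^ (n - k))"

definition budak :: "real \<Rightarrow> nat \<Rightarrow> nat \<Rightarrow> complex \<Rightarrow> complex" where
  "budak \<gamma> m n s =
     (bessel_gen n 0 2 1 / bessel_gen m 0 2 1) *
     (bessel_gen m (2 * (of_real \<gamma> - 1) * s) 2 1 / bessel_gen n (2 * of_real \<gamma> * s) 2 1)"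

end

theory Submission
  imports Defs "HOL-Computational_Algebra.Polynomial"
begin

(* B_n(s,2,1) is the reverse Bessel polynomial theta_n(s) = sum_j (2n-j)!/(j!(n-j)!) s^j, which obeys
   theta_(n+2) = (4n+6) theta_(n+1) + s^2 theta_n. At s = iy this recurrence has real coefficients,
   so |theta_(n+2)|^2 and 2 Re (theta_(n+2) cnj theta_(n+1)) are real combinations of |theta_(n+1)|^2,
   |theta_n|^2 and 2 Re (theta_(n+1) cnj theta_n). Explicit polynomials F_n satisfy the matching
   recurrences, and induction gives |theta_n(iy)|^2 = F_n(y^2), with cross term 4 F_(n+1)'(y^2).
   Budak's function is a quotient of two such values, normalised by theta_n(0) = (2n)!/n!. *)

lemma fact_mult_falling_fact_of_nat_add:
  "fact a * falling_fact (of_nat a + of_nat k) k = (fact (a + k) :: complex)"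
proof (induction k)
  case 0
  then show ?case by (simp add: falling_fact_def)
next
  case (Suc k)
  have "falling_fact (of_nat a + of_nat (Suc k)) (Suc k)
      = of_nat (Suc (a + k)) * falling_fact (of_nat a + of_nat k) k"
    unfolding falling_fact_def by (subst prod.lessThan_Suc_shift) (simp add: algebra_simps)
  then have "fact a * falling_fact (of_nat a + of_nat (Suc k)) (Suc k)
      = of_nat (Suc (a + k)) * (fact a * falling_fact (of_nat a + of_nat k) k)"
    by (simp only: mult.left_commute)
  then show ?case using Suc by (simp only: add_Suc_right fact_Suc of_nat_mult)
qed

definition rbessel_coeff :: "nat \<Rightarrow> nat \<Rightarrow> real" where
  "rbessel_coeff n j = real (n choose j) * fact (2*n - j) / fact n"

definition rbessel :: "nat \<Rightarrow> complex poly" where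
  "rbessel n = (\<Sum>j=0..n. monom (of_real (rbessel_coeff n j)) j)"

lemma rbessel_coeff_eq:
  "j \<le> n \<Longrightarrow> rbessel_coeff n j = fact (2*n - j) / (fact j * fact (n-j))"
  by (simp add: rbessel_coeff_def binomial_fact)

lemma rbessel_coeff_eq_0: "n < j \<Longrightarrow> rbessel_coeff n j = 0"
  by (simp add: rbessel_coeff_def)

lemma coeff_rbessel: "coeff (rbessel n) j = of_real (rbessel_coeff n j)"
  by (auto simp: rbessel_def coeff_sum rbessel_coeff_eq_0)

lemma poly_rbessel: "poly (rbessel n) s = (\<Sum>j=0..n. of_real (rbessel_coeff n j) * s ^ j)"
  by (simp add: rbessel_def poly_sum poly_monom)

lemma bessel_gen_eq_poly_rbessel: "bessel_gen n s 2 1 = poly (rbessel n) s"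
proof -
  have "bessel_gen n s 2 1 =
      (\<Sum>k=0..n. of_nat (n choose k) * falling_fact (of_nat n + of_nat k) k * s ^ (n - k))"
    unfolding bessel_gen_def by simp
  also have "\<dots> =
      (\<Sum>j=0..n. of_nat (n choose (n-j)) * falling_fact (of_nat n + of_nat (n-j)) (n-j) * s ^ (n - (n-j)))"
    by (subst sum.atLeastAtMost_rev) simp
  also have "\<dots> = (\<Sum>j=0..n. of_real (rbessel_coeff n j) * s ^ j)"
  proof (rule sum.cong[OF refl])
    fix j assume "j \<in> {0..n}"
    then have "n + (n-j) = 2*n - j" "n choose (n-j) = n choose j" "n - (n-j) = j"
      by (auto simp: binomial_symmetric[symmetric])
    moreover have "falling_fact (of_nat n + of_nat (n-j)) (n-j) = (fact (n + (n-j)) / fact n :: complex)"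
      using fact_mult_falling_fact_of_nat_add[of n "n-j"] by (simp add: field_simps)
    ultimately show "of_nat (n choose (n-j)) * falling_fact (of_nat n + of_nat (n-j)) (n-j) * s ^ (n - (n-j))
        = of_real (rbessel_coeff n j) * s ^ j"
      by (simp add: rbessel_coeff_def)
  qed
  finally show ?thesis by (simp add: poly_rbessel)
qed

lemma poly_rbessel_0: "poly (rbessel n) 0 = of_real (fact (2*n) / fact n)"
  by (simp add: poly_0_coeff_0 coeff_rbessel rbessel_coeff_def)

lemma rbessel_coeff_rec_low:
  assumes "j < 2"
  shows "rbessel_coeff (n+2) j = (4 * real n + 6) * rbessel_coeff (n+1) j"
proof -
  have "j = 0 \<or> j = 1" using assms by auto
  then show ?thesis
    by (elim disjE) (simp_all add: rbessel_coeff_eq eval_nat_numeral fact_Suc divide_simps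
        del: of_nat_Suc, simp_all add: algebra_simps)
qed

lemma rbessel_coeff_rec:
  "rbessel_coeff (n+2) (j+2) = (4 * real n + 6) * rbessel_coeff (n+1) (j+2) + rbessel_coeff n j"
proof (cases j n rule: linorder_cases)
  case less
  then obtain q where n: "n = j + q + 1" using less_imp_Suc_add by fastforce
  have e1: "rbessel_coeff (n+2) (j+2) = fact (j+2*q+4) / (fact (j+2) * fact (q+1))"
    and e2: "rbessel_coeff (n+1) (j+2) = fact (j+2*q+2) / (fact (j+2) * fact q)"
    and e3: "rbessel_coeff n j = fact (j+2*q+2) / (fact j * fact (q+1))"
    using n by (simp_all add: rbessel_coeff_eq algebra_simps)
  have "fact (j+2*q+4) = of_nat (j+2*q+4) * of_nat (j+2*q+3) * (fact (j+2*q+2) :: real)"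
    and "fact (j+2) = of_nat (j+2) * of_nat (j+1) * (fact j :: real)"
    and "fact (q+1) = of_nat (q+1) * (fact q :: real)"
    by (simp_all add: eval_nat_numeral fact_Suc)
  then show ?thesis
    unfolding e1 e2 e3 using n by (simp add: divide_simps) (simp add: algebra_simps)
qed (simp_all add: rbessel_coeff_eq rbessel_coeff_eq_0)

lemma rbessel_rec:
  "rbessel (n+2) = smult (of_real (4 * real n + 6)) (rbessel (n+1)) + pCons 0 (pCons 0 (rbessel n))"
  (is "_ = ?rhs")
proof (rule poly_eqI)
  fix j
  show "coeff (rbessel (n+2)) j = coeff ?rhs j"
  proof (cases "j < 2")
    case True
    then show ?thesis
      using rbessel_coeff_rec_low[of j n] by (auto simp: coeff_rbessel coeff_pCons split: nat.split)
  next
    case False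
    then obtain i where "j = i + 2" by (metis add.commute le_Suc_ex not_less)
    then show ?thesis using rbessel_coeff_rec[of n i] by (simp add: coeff_rbessel)
  qed
qed

definition rbessel_sq_coeff :: "nat \<Rightarrow> nat \<Rightarrow> real" where
  "rbessel_sq_coeff n j = real (n choose j) * fact (2*(n-j)) * fact (2*n-j) / (fact (n-j) * fact n)"

(* F_n, satisfying F_n(y^2) = |theta_n(iy)|^2 for theta_n = rbessel n *)
definition rbessel_sq :: "nat \<Rightarrow> real poly" where
  "rbessel_sq n = (\<Sum>j=0..n. monom (rbessel_sq_coeff n j) j)"

lemma rbessel_sq_coeff_eq:
  "j \<le> n \<Longrightarrow>
    rbessel_sq_coeff n j = fact (2*(n-j)) * fact (2*n-j) / ((fact (n-j))\<^sup>2 * fact j)"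
  by (simp add: rbessel_sq_coeff_def binomial_fact power2_eq_square)

lemma rbessel_sq_coeff_eq_0: "n < j \<Longrightarrow> rbessel_sq_coeff n j = 0"
  by (simp add: rbessel_sq_coeff_def)

lemma coeff_rbessel_sq: "coeff (rbessel_sq n) j = rbessel_sq_coeff n j"
  by (auto simp: rbessel_sq_def coeff_sum rbessel_sq_coeff_eq_0)

lemma coeff_pderiv_rbessel_sq:
  "coeff (pderiv (rbessel_sq n)) j = (real j + 1) * rbessel_sq_coeff n (j+1)"
  by (simp add: coeff_pderiv coeff_rbessel_sq)

lemma rbessel_sq_coeff_rec_low:
  assumes "j < 2"
  shows "rbessel_sq_coeff (n+2) j =
    (4 * real n + 6) * (4 * real n + 6 - 4 * real j) * rbessel_sq_coeff (n+1) j"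
proof -
  have "j = 0 \<or> j = 1" using assms by auto
  then show ?thesis
    by (elim disjE) (simp_all add: rbessel_sq_coeff_eq eval_nat_numeral fact_Suc divide_simps
        del: of_nat_Suc, simp_all add: algebra_simps)
qed

lemma rbessel_sq_coeff_rec:
  "rbessel_sq_coeff (n+2) (j+2) =
     (4 * real n + 6) * (4 * real n + 6 - 4 * (real j + 2)) * rbessel_sq_coeff (n+1) (j+2)
     + rbessel_sq_coeff n j"
proof (cases j n rule: linorder_cases)
  case less
  then obtain q where n: "n = j + q + 1" using less_imp_Suc_add by fastforce
  have e1: "rbessel_sq_coeff (n+2) (j+2) = fact (2*q+2) * fact (j+2*q+4) / ((fact (q+1))\<^sup>2 * fact (j+2))"
    and e2: "rbessel_sq_coeff (n+1) (j+2) = fact (2*q) * fact (j+2*q+2) / ((fact q)\<^sup>2 * fact (j+2))"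
    and e3: "rbessel_sq_coeff n j = fact (2*q+2) * fact (j+2*q+2) / ((fact (q+1))\<^sup>2 * fact j)"
    using n by (simp_all add: rbessel_sq_coeff_eq algebra_simps)
  have "fact (j+2*q+4) = of_nat (j+2*q+4) * of_nat (j+2*q+3) * (fact (j+2*q+2) :: real)"
    and "fact (2*q+2) = of_nat (2*q+2) * of_nat (2*q+1) * (fact (2*q) :: real)"
    and "fact (j+2) = of_nat (j+2) * of_nat (j+1) * (fact j :: real)"
    and "fact (q+1) = of_nat (q+1) * (fact q :: real)"
    by (simp_all add: eval_nat_numeral fact_Suc)
  then show ?thesis
    unfolding e1 e2 e3 using n by (simp add: divide_simps) (simp add: algebra_simps power2_eq_square)
qed (simp_all add: rbessel_sq_coeff_eq rbessel_sq_coeff_eq_0)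

lemma rbessel_sq_coeff_pderiv_rec:
  "(real j + 1) * rbessel_sq_coeff (n+2) (j+1) = (2 * real n + 3 - real j) * rbessel_sq_coeff (n+1) j"
proof (cases "j \<le> n+1")
  case True
  then obtain p where n: "n + 1 = j + p" by (metis le_add_diff_inverse)
  have e1: "rbessel_sq_coeff (n+2) (j+1) = fact (2*p) * fact (j+2*p+1) / ((fact p)\<^sup>2 * fact (j+1))"
    and e2: "rbessel_sq_coeff (n+1) j = fact (2*p) * fact (j+2*p) / ((fact p)\<^sup>2 * fact j)"
    using n by (simp_all add: rbessel_sq_coeff_eq algebra_simps)
  have "real n = real j + real p - 1" using n by linarith
  then show ?thesis unfolding e1 e2 by (simp add: divide_simps) (simp add: algebra_simps)
qed (simp add: rbessel_sq_coeff_eq_0)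

lemma rbessel_sq_rec:
  "rbessel_sq (n+2) =
     smult ((4 * real n + 6)\<^sup>2) (rbessel_sq (n+1))
     - smult (4 * real n + 6) (pCons 0 (smult 4 (pderiv (rbessel_sq (n+1)))))
     + pCons 0 (pCons 0 (rbessel_sq n))" (is "_ = ?rhs")
proof (rule poly_eqI)
  fix j
  show "coeff (rbessel_sq (n+2)) j = coeff ?rhs j"
  proof (cases "j < 2")
    case True
    then show ?thesis
      using rbessel_sq_coeff_rec_low[of j n]
      by (auto simp: coeff_rbessel_sq coeff_pderiv_rbessel_sq coeff_pCons power2_eq_square algebra_simps
          split: nat.split)
  next
    case False
    then obtain i where "j = i + 2" by (metis add.commute le_Suc_ex not_less)
    then show ?thesis
      using rbessel_sq_coeff_rec[of n i]
      by (simp add: coeff_rbessel_sq coeff_pderiv_rbessel_sq power2_eq_square algebra_simps)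
  qed
qed

lemma rbessel_sq_pderiv_rec:
  "pderiv (rbessel_sq (n+2)) =
    smult (2 * real n + 3) (rbessel_sq (n+1)) - pCons 0 (pderiv (rbessel_sq (n+1)))"
proof (rule poly_eqI)
  fix j
  show "coeff (pderiv (rbessel_sq (n+2))) j =
      coeff (smult (2 * real n + 3) (rbessel_sq (n+1)) - pCons 0 (pderiv (rbessel_sq (n+1)))) j"
    using rbessel_sq_coeff_pderiv_rec[of j n]
    by (cases j) (simp_all add: coeff_pderiv_rbessel_sq coeff_rbessel_sq algebra_simps)
qed

lemma cmod_power2_real_comb:
  fixes A B :: complex and a t :: real
  shows "(cmod (of_real a * A - of_real t * B))\<^sup>2 =
    a\<^sup>2 * (cmod A)\<^sup>2 - a * t * (2 * Re (A * cnj B)) + t\<^sup>2 * (cmod B)\<^sup>2"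
  unfolding cmod_power2 by (simp add: power2_eq_square algebra_simps)

lemma Re_real_comb_mult_cnj:
  fixes A B :: complex and a t :: real
  shows "2 * Re ((of_real a * A - of_real t * B) * cnj A) =
    2 * a * (cmod A)\<^sup>2 - t * (2 * Re (A * cnj B))"
  unfolding cmod_power2 by (simp add: power2_eq_square algebra_simps)

lemma cmod_power2_rbessel_imaginary_pair:
  fixes y :: real
  defines "z \<equiv> \<i> * of_real y" and "t \<equiv> y\<^sup>2"
  shows "(cmod (poly (rbessel n) z))\<^sup>2 = poly (rbessel_sq n) t \<and>
    (cmod (poly (rbessel (n+1)) z))\<^sup>2 = poly (rbessel_sq (n+1)) t \<and>
    2 * Re (poly (rbessel (n+1)) z * cnj (poly (rbessel n) z)) = 4 * poly (pderiv (rbessel_sq (n+1))) t"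
proof (induction n)
  case 0
  have "rbessel 0 = 1" "rbessel 1 = [:2, 1:]" "rbessel_sq 0 = 1" "rbessel_sq 1 = [:4, 1:]"
    by (auto intro!: poly_eqI simp: coeff_rbessel rbessel_coeff_def coeff_rbessel_sq rbessel_sq_coeff_def
        coeff_pCons split: nat.split)
  then show ?case by (simp add: z_def t_def cmod_power2 pderiv_pCons)
next
  case (Suc n)
  define A where "A = poly (rbessel (n+1)) z"
  define B where "B = poly (rbessel n) z"
  define a where "a = 4 * real n + 6"
  have "z * z = - of_real t" by (simp add: z_def t_def power2_eq_square algebra_simps)
  then have C: "poly (rbessel (n + 2)) z = of_real a * A - of_real t * B"
    unfolding rbessel_rec by (simp add: A_def B_def a_def mult.assoc[symmetric])
  have IH: "(cmod B)\<^sup>2 = poly (rbessel_sq n) t" "(cmod A)\<^sup>2 = poly (rbessel_sq (n+1)) t"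
    "2 * Re (A * cnj B) = 4 * poly (pderiv (rbessel_sq (n+1))) t"
    using Suc.IH by (simp_all add: A_def B_def)
  have "(cmod (poly (rbessel (n + 2)) z))\<^sup>2 = poly (rbessel_sq (n + 2)) t"
    unfolding C cmod_power2_real_comb IH rbessel_sq_rec
    by (simp add: a_def power2_eq_square algebra_simps)
  moreover have "2 * Re (poly (rbessel (n + 2)) z * cnj A) = 4 * poly (pderiv (rbessel_sq (n + 2))) t"
    unfolding C Re_real_comb_mult_cnj IH rbessel_sq_pderiv_rec
    by (simp add: a_def algebra_simps)
  ultimately show ?case
    using IH(2) by (simp add: A_def)
qed

lemma cmod_power2_rbessel_imaginary:
  "(cmod (poly (rbessel n) (\<i> * of_real y)))\<^sup>2 = poly (rbessel_sq n) (y\<^sup>2)"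
  using cmod_power2_rbessel_imaginary_pair by blast

lemma fact_mult_poly_rbessel_sq:
  "fact n * poly (rbessel_sq n) (x\<^sup>2) =
    (\<Sum>k=0..n. real (n choose k) * (fact (2*k) / fact k) * fact (n+k) * x ^ (2*(n-k)))"
proof -
  have "fact n * poly (rbessel_sq n) (x\<^sup>2) = (\<Sum>j=0..n. fact n * rbessel_sq_coeff n j * (x\<^sup>2)^j)"
    by (simp add: rbessel_sq_def poly_sum poly_monom sum_distrib_left mult.assoc)
  also have "\<dots> = (\<Sum>k=0..n. fact n * rbessel_sq_coeff n (n-k) * (x\<^sup>2)^(n-k))"
    by (subst sum.atLeastAtMost_rev) simp
  also have "\<dots> = (\<Sum>k=0..n. real (n choose k) * (fact (2*k) / fact k) * fact (n+k) * x ^ (2*(n-k)))"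
  proof (rule sum.cong[OF refl])
    fix k assume "k \<in> {0..n}"
    then have "n - (n-k) = k" "2*n - (n-k) = n+k" "n choose (n-k) = n choose k"
      by (auto simp: binomial_symmetric[symmetric])
    then show "fact n * rbessel_sq_coeff n (n-k) * (x\<^sup>2)^(n-k) =
        real (n choose k) * (fact (2*k) / fact k) * fact (n+k) * x ^ (2*(n-k))"
      by (simp add: rbessel_sq_coeff_def power_mult[symmetric] field_simps)
  qed
  finally show ?thesis .
qed

theorem mainTheorem6:
  fixes m n :: nat and \<gamma> \<omega> :: real
  assumes "n > m"
  shows "(cmod (budak \<gamma> m n (\<i> * of_real \<omega>)))\<^sup>2 =
    (fact (2*n) / fact (2*m))\<^sup>2 * (fact m / fact n) *
    ((\<Sum>i=0..m. real (m choose i) * (fact (2*i) / fact i) * fact (m+i)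
                  * (2 * (\<gamma> - 1) * \<omega>) ^ (2*(m-i)))
     / (\<Sum>k=0..n. real (n choose k) * (fact (2*k) / fact k) * fact (n+k)
                  * (2 * \<gamma> * \<omega>) ^ (2*(n-k))))"
proof -
  define x1 where "x1 = 2 * (\<gamma> - 1) * \<omega>"
  define x2 where "x2 = 2 * \<gamma> * \<omega>"
  have args: "2 * (complex_of_real \<gamma> - 1) * (\<i> * complex_of_real \<omega>) = \<i> * complex_of_real x1"
    "2 * complex_of_real \<gamma> * (\<i> * complex_of_real \<omega>) = \<i> * complex_of_real x2"
    by (simp_all add: x1_def x2_def algebra_simps)
  have "(cmod (budak \<gamma> m n (\<i> * of_real \<omega>)))\<^sup>2 =
      ((fact (2*n) / fact n) / (fact (2*m) / fact m))\<^sup>2 *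
      (poly (rbessel_sq m) (x1\<^sup>2) / poly (rbessel_sq n) (x2\<^sup>2))"
    unfolding budak_def args bessel_gen_eq_poly_rbessel poly_rbessel_0
      cmod_power2_rbessel_imaginary[symmetric]
    by (simp add: norm_mult norm_divide power_mult_distrib power_divide del: of_real_divide)
      (simp add: ac_simps)
  also have "\<dots> = (fact (2*n) / fact (2*m))\<^sup>2 * (fact m / fact n) *
      ((fact m * poly (rbessel_sq m) (x1\<^sup>2)) / (fact n * poly (rbessel_sq n) (x2\<^sup>2)))"
    by (simp add: field_simps power2_eq_square)
  finally show ?thesis unfolding fact_mult_poly_rbessel_sq x1_def x2_def .
qed

end
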